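(* Let $X$ be a compact metric space, $T:X\to X$ a surjective continuous map which is not one-to-one, and $f\in C(X,\mathbb{R})$. Then for each finite open cover $\mathcal{U}$ of $X$, each compact $K\subseteq X$ and all $n,m\in\mathbb{N}$, $$P_n(T,f\circ T^m,T^{-m}\mathcal{U},T^{-m}K)=P_n(T,f,\mathcal{U},K).$$
   Context: For $g\in C(X,\mathbb{R})$, $g_n=\sum_{i=0}^{n-1}g\circ T^i$. $\mathcal{C}_X$ = finite Borel covers of $X$; $\mathcal{V}\succeq\mathcal{W}$ means each element of $\mathcal{V}$ lies in some element of $\mathcal{W}$; $\mathcal{W}_0^{n-1}=\bigvee_{i=0}^{n-1}T^{-i}\mathcal{W}$; $T^{-m}\mathcal{U}=\{T^{-m}U:U\in\mathcal{U}\}$ and $T^{-m}K$ denotes the preimage. $P_n(T,g,\mathcal{W},L)=\inf\{\sum_{V\in\mathcal{V}}\sup_{x\in V\cap L}\exp g_n(x):\mathcal{V}\in\mathcal{C}_X,\ \mathcal{V}\succeq\mathcal{W}_0^{n-1}\}$, terms with $V\cap L=\emptyset$ contributing $0$. *)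

theory Defs
  imports "HOL-Analysis.Analysis"
begin

definition birkhoff_sum :: "('a \<Rightarrow> 'a) \<Rightarrow> ('a \<Rightarrow> real) \<Rightarrow> nat \<Rightarrow> 'a \<Rightarrow> real" where
  "birkhoff_sum T g n x = (\<Sum>i<n. g ((T ^^ i) x))"

definition borel_covers :: "('a::topological_space) set set set" where
  "borel_covers = {\<V>. finite \<V> \<and> \<V> \<subseteq> sets borel \<and> \<Union>\<V> = UNIV}"

definition refines :: "'a set set \<Rightarrow> 'a set set \<Rightarrow> bool" where
  "refines \<V> \<W> \<longleftrightarrow> (\<forall>V\<in>\<V>. \<exists>W\<in>\<W>. V \<subseteq> W)"

definition join_cover :: "('a \<Rightarrow> 'a) \<Rightarrow> 'a set set \<Rightarrow> nat \<Rightarrow> 'a set set" where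
  "join_cover T \<W> n = {(\<Inter>i<n. (T ^^ i) -` (w i)) | w. \<forall>i<n. w i \<in> \<W>}"

definition preimage_cover :: "('a \<Rightarrow> 'a) \<Rightarrow> nat \<Rightarrow> 'a set set \<Rightarrow> 'a set set" where
  "preimage_cover T m \<U> = (\<lambda>U. (T ^^ m) -` U) ` \<U>"

definition P_n :: "nat \<Rightarrow> ('a::topological_space \<Rightarrow> 'a) \<Rightarrow> ('a \<Rightarrow> real) \<Rightarrow> 'a set set \<Rightarrow> 'a set \<Rightarrow> real" where
  "P_n n T g \<W> L = Inf {(\<Sum>V\<in>\<V>. if V \<inter> L = {} then 0
                                    else (SUP x\<in>V \<inter> L. exp (birkhoff_sum T g n x)))
                        | \<V>. \<V> \<in> borel_covers \<and> refines \<V> (join_cover T \<W> n)}"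

end

theory Submission
  imports Defs
begin

text \<open>
  Write \<open>S = T^m\<close>. Since \<open>S\<close> commutes with \<open>T\<close>, the Birkhoff sum of \<open>f \<circ> S\<close> is
  \<open>f\<^sub>n \<circ> S\<close> and the join of \<open>S\<^sup>-\<^sup>1\<U>\<close> is the \<open>S\<close>-preimage of the join of \<open>\<U>\<close>. Both sides are
  therefore infima of the same kind of sums, taken over Borel covers refining \<open>S\<^sup>-\<^sup>1\<W>\<close> and
  over Borel covers refining \<open>\<W>\<close>, and the weight of \<open>V\<close> on the left equals the weight of
  \<open>S V\<close> on the right. Pulling covers back along the surjection \<open>S\<close> reproduces every sum of
  the right-hand side; pushing a cover forward gives sums no larger than those of the
  left-hand side.
\<close>

definition sup_exp_weight :: "('a \<Rightarrow> real) \<Rightarrow> 'a set \<Rightarrow> 'a set \<Rightarrow> real" where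
  "sup_exp_weight h L V = (if V \<inter> L = {} then 0 else (SUP x\<in>V \<inter> L. exp (h x)))"

definition cover_pressure :: "('a::topological_space \<Rightarrow> real) \<Rightarrow> 'a set \<Rightarrow> 'a set set \<Rightarrow> real" where
  "cover_pressure h L \<W> =
     Inf {sum (sup_exp_weight h L) \<V> | \<V>. \<V> \<in> borel_covers \<and> refines \<V> \<W>}"

lemma P_n_eq_cover_pressure:
  "P_n n T g \<W> L = cover_pressure (birkhoff_sum T g n) L (join_cover T \<W> n)"
  unfolding P_n_def cover_pressure_def sup_exp_weight_def by simp

lemma exp_le_sup_exp_weight:
  assumes "bdd_above ((\<lambda>x. exp (h x)) ` L)" and "y \<in> V \<inter> L"
  shows "exp (h y) \<le> sup_exp_weight h L V"
proof -
  have "bdd_above ((\<lambda>x. exp (h x)) ` (V \<inter> L))"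
    by (rule bdd_above_mono[OF assms(1)]) auto
  then show ?thesis
    using assms(2) unfolding sup_exp_weight_def by (auto intro: cSUP_upper)
qed

lemma sup_exp_weight_nonneg:
  assumes "bdd_above ((\<lambda>x. exp (h x)) ` L)"
  shows "0 \<le> sup_exp_weight h L V"
proof (cases "V \<inter> L = {}")
  case False
  then obtain y where "y \<in> V \<inter> L" by blast
  with exp_le_sup_exp_weight[OF assms this] show ?thesis
    by (meson exp_ge_zero order_trans)
qed (simp add: sup_exp_weight_def)

lemma sup_exp_weight_le:
  assumes "0 \<le> c" and "\<forall>y\<in>V \<inter> L. exp (h y) \<le> c"
  shows "sup_exp_weight h L V \<le> c"
  using assms unfolding sup_exp_weight_def by (auto intro: cSUP_least)

lemma sup_exp_weight_comp_vimage:
  "sup_exp_weight (h \<circ> S) (S -` L) V = sup_exp_weight h L (S ` V)"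
proof -
  have "(\<lambda>x. exp ((h \<circ> S) x)) ` (V \<inter> S -` L) = (\<lambda>y. exp (h y)) ` (S ` V \<inter> L)"
    by auto
  moreover have "V \<inter> S -` L = {} \<longleftrightarrow> S ` V \<inter> L = {}"
    by auto
  ultimately show ?thesis
    unfolding sup_exp_weight_def by simp
qed

lemma refines_image_vimage:
  "refines \<V> \<W> \<Longrightarrow> refines ((-`) S ` \<V>) ((-`) S ` \<W>)"
  unfolding refines_def by (auto dest!: bspec)

lemma image_vimage_in_borel_covers:
  assumes "S \<in> borel_measurable borel" and "\<V> \<in> borel_covers"
  shows "(-`) S ` \<V> \<in> borel_covers"
proof -
  have "\<Union>((-`) S ` \<V>) = S -` \<Union>\<V>"
    by blast
  moreover have "(-`) S ` \<V> \<subseteq> sets borel"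
    using assms(2) measurable_sets_borel[OF assms(1)] unfolding borel_covers_def by blast
  ultimately show ?thesis
    using assms(2) unfolding borel_covers_def by simp
qed

lemma sum_sup_exp_weight_image_vimage:
  assumes "surj S" and "finite \<V>"
  shows "sum (sup_exp_weight (h \<circ> S) (S -` L)) ((-`) S ` \<V>) = sum (sup_exp_weight h L) \<V>"
proof -
  have "inj_on ((-`) S) \<V>"
    by (rule inj_onI) (metis assms(1) surj_image_vimage_eq)
  then show ?thesis
    by (simp add: sum.reindex sup_exp_weight_comp_vimage assms(1))
qed

text \<open>
  The images \<open>S ` V\<close> of a cover need not be Borel. Each one is replaced by the Borel
  set of points of \<open>J\<close> (the cover element containing it) that lie outside \<open>L\<close> or carry
  weight at most that of \<open>S ` V\<close>; by surjectivity these sets still cover.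
\<close>
lemma borel_cover_pushforward:
  fixes S :: "'a::topological_space \<Rightarrow> 'b::topological_space"
  assumes "surj S" and "h \<in> borel_measurable borel" and "L \<in> sets borel"
    and bdd: "bdd_above ((\<lambda>y. exp (h y)) ` L)" and "\<W> \<subseteq> sets borel"
    and "\<V> \<in> borel_covers" and "refines \<V> ((-`) S ` \<W>)"
  obtains \<V>' where "\<V>' \<in> borel_covers" and "refines \<V>' \<W>"
    and "sum (sup_exp_weight h L) \<V>' \<le> sum (\<lambda>V. sup_exp_weight h L (S ` V)) \<V>"
proof -
  have "\<forall>V\<in>\<V>. \<exists>J. J \<in> \<W> \<and> S ` V \<subseteq> J"
    using assms(7) unfolding refines_def by blast
  from bchoice[OF this] obtain J where J: "\<And>V. V \<in> \<V> \<Longrightarrow> J V \<in> \<W> \<and> S ` V \<subseteq> J V"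
    by blast
  define B where
    "B V = J V \<inter> (- L \<union> {y. exp (h y) \<le> sup_exp_weight h L (S ` V)})" for V
  have finite: "finite \<V>"
    using assms(6) unfolding borel_covers_def by simp
  have "B V \<in> sets borel" if "V \<in> \<V>" for V
  proof -
    have "J V \<in> sets borel"
      using J[OF that] assms(5) by blast
    moreover have "{y. exp (h y) \<le> sup_exp_weight h L (S ` V)} \<in> sets borel"
      using assms(2) by measurable
    ultimately show ?thesis
      unfolding B_def using assms(3) by (intro sets.Int sets.Un borel_comp)
  qed
  moreover have "\<Union>(B ` \<V>) = UNIV"
  proof (intro set_eqI iffI)
    fix y :: 'b
    obtain x where x: "y = S x"
      using assms(1) by (metis surjD)
    moreover have "x \<in> \<Union>\<V>"
      using assms(6) unfolding borel_covers_def by simp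
    ultimately obtain V where "V \<in> \<V>" "y \<in> S ` V"
      by blast
    moreover have "y \<in> L \<Longrightarrow> exp (h y) \<le> sup_exp_weight h L (S ` V)"
      using exp_le_sup_exp_weight[OF bdd] \<open>y \<in> S ` V\<close> by blast
    ultimately show "y \<in> \<Union>(B ` \<V>)"
      using J unfolding B_def by blast
  qed simp
  ultimately have "B ` \<V> \<in> borel_covers"
    using finite unfolding borel_covers_def by auto
  moreover have "refines (B ` \<V>) \<W>"
    using J unfolding refines_def B_def by blast
  moreover have "sum (sup_exp_weight h L) (B ` \<V>) \<le> sum (\<lambda>V. sup_exp_weight h L (S ` V)) \<V>"
  proof -
    have "sum (sup_exp_weight h L) (B ` \<V>) \<le> sum (sup_exp_weight h L \<circ> B) \<V>"
      by (rule sum_image_le[OF finite]) (simp add: sup_exp_weight_nonneg[OF bdd])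
    also have "\<dots> \<le> sum (\<lambda>V. sup_exp_weight h L (S ` V)) \<V>"
      by (intro sum_mono)
        (auto simp: B_def intro!: sup_exp_weight_le sup_exp_weight_nonneg[OF bdd])
    finally show ?thesis .
  qed
  ultimately show ?thesis
    using that by blast
qed

lemma cInf_eq_if_mutually_dominated:
  fixes A B :: "'a::conditionally_complete_lattice set"
  assumes "A \<noteq> {}" and "bdd_below A" and "bdd_below B"
    and "\<forall>a\<in>A. \<exists>b\<in>B. b \<le> a" and "\<forall>b\<in>B. \<exists>a\<in>A. a \<le> b"
  shows "Inf A = Inf B"
proof -
  have "B \<noteq> {}"
    using assms(1,4) by blast
  show ?thesis
  proof (rule order.antisym)
    show "Inf A \<le> Inf B"
      by (rule cInf_mono[OF \<open>B \<noteq> {}\<close> assms(2)]) (use assms(5) in blast)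
    show "Inf B \<le> Inf A"
      by (rule cInf_mono[OF assms(1,3)]) (use assms(4) in blast)
  qed
qed

theorem cover_pressure_comp_vimage:
  fixes S :: "'a::topological_space \<Rightarrow> 'b::topological_space"
  assumes "surj S" and "S \<in> borel_measurable borel"
    and "h \<in> borel_measurable borel" and "L \<in> sets borel"
    and bdd: "bdd_above ((\<lambda>y. exp (h y)) ` L)" and "\<W> \<in> borel_covers"
  shows "cover_pressure (h \<circ> S) (S -` L) ((-`) S ` \<W>) = cover_pressure h L \<W>"
proof -
  define A where "A = {sum (sup_exp_weight (h \<circ> S) (S -` L)) \<V> | \<V>.
                       \<V> \<in> borel_covers \<and> refines \<V> ((-`) S ` \<W>)}"
  define B where "B = {sum (sup_exp_weight h L) \<V> | \<V>. \<V> \<in> borel_covers \<and> refines \<V> \<W>}"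
  have B_dominates_A: "\<forall>a\<in>A. \<exists>b\<in>B. b \<le> a"
  proof
    fix a assume "a \<in> A"
    then obtain \<V> where a: "a = sum (sup_exp_weight (h \<circ> S) (S -` L)) \<V>"
      and \<V>: "\<V> \<in> borel_covers" "refines \<V> ((-`) S ` \<W>)"
      unfolding A_def by blast
    have "\<W> \<subseteq> sets borel"
      using assms(6) unfolding borel_covers_def by simp
    from borel_cover_pushforward[OF assms(1,3,4) bdd this \<V>] show "\<exists>b\<in>B. b \<le> a"
      unfolding a B_def sup_exp_weight_comp_vimage by blast
  qed
  have A_dominates_B: "\<forall>b\<in>B. \<exists>a\<in>A. a \<le> b"
  proof
    fix b assume "b \<in> B"
    then obtain \<V> where b: "b = sum (sup_exp_weight h L) \<V>"
      and \<V>: "\<V> \<in> borel_covers" "refines \<V> \<W>"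
      unfolding B_def by blast
    have "finite \<V>"
      using \<V>(1) unfolding borel_covers_def by simp
    then have "sum (sup_exp_weight (h \<circ> S) (S -` L)) ((-`) S ` \<V>) = b"
      unfolding b by (rule sum_sup_exp_weight_image_vimage[OF assms(1)])
    moreover have "sum (sup_exp_weight (h \<circ> S) (S -` L)) ((-`) S ` \<V>) \<in> A"
      unfolding A_def
      using image_vimage_in_borel_covers[OF assms(2) \<V>(1)] refines_image_vimage[OF \<V>(2)]
      by blast
    ultimately show "\<exists>a\<in>A. a \<le> b"
      by (metis order.refl)
  qed
  have "refines \<W> \<W>"
    unfolding refines_def by blast
  then have "B \<noteq> {}"
    using assms(6) unfolding B_def by blast
  moreover have "bdd_below A"
  proof (rule bdd_belowI)
    fix a assume "a \<in> A"
    then show "0 \<le> a"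
      unfolding A_def
      by (auto intro!: sum_nonneg simp: sup_exp_weight_comp_vimage sup_exp_weight_nonneg[OF bdd])
  qed
  moreover have "bdd_below B"
  proof (rule bdd_belowI)
    fix b assume "b \<in> B"
    then show "0 \<le> b"
      unfolding B_def by (auto intro!: sum_nonneg sup_exp_weight_nonneg[OF bdd])
  qed
  ultimately have "Inf B = Inf A"
    using A_dominates_B B_dominates_A by (intro cInf_eq_if_mutually_dominated)
  then show ?thesis
    unfolding cover_pressure_def A_def B_def by (rule sym)
qed

lemma funpow_commute_apply: "(f ^^ m) ((f ^^ n) x) = (f ^^ n) ((f ^^ m) x)"
  by (metis add.commute comp_apply funpow_add)

lemma continuous_on_funpow:
  fixes T :: "'a::topological_space \<Rightarrow> 'a"
  assumes "continuous_on UNIV T"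
  shows "continuous_on UNIV (T ^^ i)"
proof (induction i)
  case (Suc i)
  then show ?case
    by (simp add: continuous_on_compose2[OF assms Suc])
qed (simp add: continuous_on_id)

lemma continuous_on_birkhoff_sum:
  fixes T :: "'a::topological_space \<Rightarrow> 'a"
  assumes "continuous_on UNIV T" and "continuous_on UNIV f"
  shows "continuous_on UNIV (birkhoff_sum T f n)"
  unfolding birkhoff_sum_def[abs_def]
  by (intro continuous_on_sum continuous_on_compose2[OF assms(2) continuous_on_funpow[OF assms(1)]])
    auto

lemma birkhoff_sum_comp_funpow:
  "birkhoff_sum T (f \<circ> T ^^ m) n = birkhoff_sum T f n \<circ> T ^^ m"
  by (simp add: fun_eq_iff birkhoff_sum_def funpow_commute_apply)

lemma join_cover_preimage_cover:
  "join_cover T (preimage_cover T m \<W>) n = preimage_cover T m (join_cover T \<W> n)"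
proof -
  have vimage_commute: "(T ^^ i) -` ((T ^^ m) -` U) = (T ^^ m) -` ((T ^^ i) -` U)" for i U
    by (auto simp: funpow_commute_apply)
  show ?thesis
    unfolding join_cover_def preimage_cover_def
  proof (intro set_eqI iffI)
    fix J assume "J \<in> {\<Inter>i<n. (T ^^ i) -` w i | w. \<forall>i<n. w i \<in> (\<lambda>U. (T ^^ m) -` U) ` \<W>}"
    then obtain w where J: "J = (\<Inter>i<n. (T ^^ i) -` w i)"
      and w: "\<forall>i<n. w i \<in> (\<lambda>U. (T ^^ m) -` U) ` \<W>"
      by blast
    then have "\<forall>i\<in>{..<n}. \<exists>U. U \<in> \<W> \<and> w i = (T ^^ m) -` U"
      by blast
    from bchoice[OF this] obtain u where u: "\<forall>i<n. u i \<in> \<W> \<and> w i = (T ^^ m) -` u i"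
      by auto
    then have "J = (T ^^ m) -` (\<Inter>i<n. (T ^^ i) -` u i)"
      unfolding J vimage_INT by (simp add: vimage_commute)
    moreover have "(\<Inter>i<n. (T ^^ i) -` u i) \<in> {\<Inter>i<n. (T ^^ i) -` w i | w. \<forall>i<n. w i \<in> \<W>}"
      using u by blast
    ultimately show "J \<in> (\<lambda>U. (T ^^ m) -` U) ` {\<Inter>i<n. (T ^^ i) -` w i | w. \<forall>i<n. w i \<in> \<W>}"
      by (rule image_eqI)
  next
    fix J assume "J \<in> (\<lambda>U. (T ^^ m) -` U) ` {\<Inter>i<n. (T ^^ i) -` w i | w. \<forall>i<n. w i \<in> \<W>}"
    then obtain u where J: "J = (T ^^ m) -` (\<Inter>i<n. (T ^^ i) -` u i)" and u: "\<forall>i<n. u i \<in> \<W>"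
      by auto
    then have "J = (\<Inter>i<n. (T ^^ i) -` ((T ^^ m) -` u i))"
      unfolding vimage_INT by (simp add: vimage_commute)
    with u show "J \<in> {\<Inter>i<n. (T ^^ i) -` w i | w. \<forall>i<n. w i \<in> (\<lambda>U. (T ^^ m) -` U) ` \<W>}"
      unfolding mem_Collect_eq by (intro exI[of _ "\<lambda>i. (T ^^ m) -` u i"]) auto
  qed
qed

lemma join_cover_in_borel_covers:
  assumes "T \<in> borel_measurable borel" and "\<W> \<in> borel_covers"
  shows "join_cover T \<W> n \<in> borel_covers"
proof -
  have "finite \<W>" and "\<W> \<subseteq> sets borel" and "\<Union>\<W> = UNIV"
    using assms(2) unfolding borel_covers_def by simp_all
  let ?join = "\<lambda>w. \<Inter>i<n. (T ^^ i) -` w i"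
  have "join_cover T \<W> n \<subseteq> ?join ` (PiE {..<n} (\<lambda>_. \<W>))"
  proof
    fix J assume "J \<in> join_cover T \<W> n"
    then obtain w where "J = ?join w" and "\<forall>i<n. w i \<in> \<W>"
      unfolding join_cover_def by blast
    then have "J = ?join (restrict w {..<n})" and "restrict w {..<n} \<in> PiE {..<n} (\<lambda>_. \<W>)"
      by auto
    then show "J \<in> ?join ` (PiE {..<n} (\<lambda>_. \<W>))"
      by blast
  qed
  moreover have "finite (PiE {..<n} (\<lambda>_. \<W>))"
    using \<open>finite \<W>\<close> by (simp add: finite_PiE)
  ultimately have "finite (join_cover T \<W> n)"
    by (meson finite_imageI finite_subset)
  moreover have "join_cover T \<W> n \<subseteq> sets borel"
  proof
    fix J assume "J \<in> join_cover T \<W> n"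
    then obtain w where J: "J = ?join w" and w: "\<forall>i<n. w i \<in> \<W>"
      unfolding join_cover_def by blast
    have "(T ^^ i) -` w i \<in> sets borel" if "i < n" for i
    proof (rule measurable_sets_borel[OF measurable_compose_n[OF assms(1)]])
      show "w i \<in> sets borel"
        using w that \<open>\<W> \<subseteq> sets borel\<close> by blast
    qed
    then show "J \<in> sets borel"
      unfolding J by (intro sets.countable_INT'') auto
  qed
  moreover have "\<Union>(join_cover T \<W> n) = UNIV"
  proof (intro set_eqI iffI)
    fix x
    have "\<forall>i. \<exists>U. U \<in> \<W> \<and> (T ^^ i) x \<in> U"
      using \<open>\<Union>\<W> = UNIV\<close> by (metis UNIV_I Union_iff)
    from choice[OF this] obtain w where w: "\<forall>i. w i \<in> \<W> \<and> (T ^^ i) x \<in> w i"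
      by blast
    then have "?join w \<in> join_cover T \<W> n"
      unfolding join_cover_def by blast
    moreover have "x \<in> ?join w"
      using w by simp
    ultimately show "x \<in> \<Union>(join_cover T \<W> n)"
      by blast
  qed simp
  ultimately show ?thesis
    unfolding borel_covers_def by simp
qed

theorem lemma5p2:
  fixes T :: "'a::metric_space \<Rightarrow> 'a" and f :: "'a \<Rightarrow> real"
    and \<U> :: "'a set set" and K :: "'a set" and n m :: nat
  assumes "compact (UNIV :: 'a set)"
    and "continuous_on UNIV T" and "surj T" and "\<not> inj T"
    and "continuous_on UNIV f"
    and "finite \<U>" and "\<forall>U\<in>\<U>. open U" and "\<Union>\<U> = UNIV"
    and "compact K"
  shows "P_n n T (f \<circ> (T ^^ m)) (preimage_cover T m \<U>) ((T ^^ m) -` K) = P_n n T f \<U> K"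
proof -
  define h where "h = birkhoff_sum T f n"
  have T_measurable: "T \<in> borel_measurable borel"
    using assms(2) by (rule borel_measurable_continuous_onI)
  have h_continuous: "continuous_on UNIV h"
    unfolding h_def using assms(2,5) by (rule continuous_on_birkhoff_sum)
  have "continuous_on UNIV (\<lambda>x. exp (h x))"
    using h_continuous by (intro continuous_intros)
  then have "compact ((\<lambda>x. exp (h x)) ` K)"
    using assms(9) by (meson compact_continuous_image continuous_on_subset subset_UNIV)
  then have "bdd_above ((\<lambda>x. exp (h x)) ` K)"
    by (intro bounded_imp_bdd_above compact_imp_bounded)
  moreover have "\<U> \<in> borel_covers"
    using assms(6-8) unfolding borel_covers_def by auto
  ultimately have "cover_pressure (h \<circ> T ^^ m) ((T ^^ m) -` K) ((-`) (T ^^ m) ` join_cover T \<U> n)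
      = cover_pressure h K (join_cover T \<U> n)"
    by (intro cover_pressure_comp_vimage surj_fn assms(3) measurable_compose_n T_measurable
        borel_measurable_continuous_onI h_continuous borel_compact assms(9)
        join_cover_in_borel_covers)
  then show ?thesis
    unfolding P_n_eq_cover_pressure birkhoff_sum_comp_funpow join_cover_preimage_cover
    unfolding preimage_cover_def h_def .
qed

end
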